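(* Consider, for $\gamma>0$, the problem $$\min_{\bar v}\ \sum_{t=1}^\tau\mathbb{E}_{\bar w}\big[q_{h_t}(y_t)\big]+\sum_{t=0}^{\tau-1}\Big(q_{g_t}(v_t)+\tfrac{1}{2\gamma}\|v_t\|_2^2\Big)\ \text{ s.t. } y_{t+1}=\Phi_{t,x}^\top y_t+\Phi_{t,u}^\top v_t+\Phi_{t,w}^\top w_t+\varphi_{t,u,w}[v_t,w_t,\cdot],\ y_0=0,$$ with $q_{h_t}(y)=h_{t,x}^\top y+\frac12y^\top H_{t,xx}y$ (up to constants), $H_{t,xx}\succeq0$, $q_{g_t}(v)=g_{t,u}^\top v+\frac12v^\top G_{t,uu}v$, $G_{t,uu}\succeq0$, $w_t\sim\mathcal{N}(0,I_q)$ independent, and $h_{0,x}=0$, $H_{0,xx}=0$. Define the cost-to-go functions by $c_\tau=q_{h_\tau}$ and the Bellman recursion $$c_t(y)=q_{h_t}(y)+\min_{v}\Big\{q_{g_t}(v)+\tfrac{1}{2\gamma}\|v\|_2^2+\mathbb{E}_{w_t}\big[c_{t+1}(\Phi_{t,x}^\top y+\Phi_{t,u}^\top v+\Phi_{t,w}^\top w_t+\varphi_{t,u,w}[v,w_t,\cdot])\big]\Big\}.$$ Then, up to additive constants, $c_t(x)=\frac12x^\top C_{t,xx}x+c_{t,x}^\top x$ with $C_{t,xx}\succeq0$, and the optimal control at time $t$ from state $y_t$ is $v_t^*(y_t)=K_ty_t+k_t$, where $C_{\tau,xx}=H_{\tau,xx}$, $c_{\tau,x}=h_{\tau,x}$ and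 for $t=\tau-1,\ldots,0$: $$w_{t,x}=h_{t,x}+\Phi_{t,x}c_{t+1,x},\quad w_{t,u}=g_{t,u}+\Phi_{t,u}c_{t+1,x}+\sum_{i=1}^q\Psi_{t,i}^\top C_{t+1,xx}\psi_{t,i},$$ $$W_{t,xx}=H_{t,xx}+\Phi_{t,x}C_{t+1,xx}\Phi_{t,x}^\top,\quad W_{t,ux}=\Phi_{t,u}C_{t+1,xx}\Phi_{t,x}^\top,$$ $$W_{t,uu}=G_{t,uu}+\Phi_{t,u}C_{t+1,xx}\Phi_{t,u}^\top+\sum_{i=1}^q\Psi_{t,i}^\top C_{t+1,xx}\Psi_{t,i}+\gamma^{-1}I_p,$$ $$C_{t,xx}=W_{t,xx}-W_{t,ux}^\top W_{t,uu}^{-1}W_{t,ux},\quad c_{t,x}=w_{t,x}-W_{t,ux}^\top W_{t,uu}^{-1}w_{t,u},\quad K_t=-W_{t,uu}^{-1}W_{t,ux},\quad k_t=-W_{t,uu}^{-1}w_{t,u}.$$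
   Context: $\Phi_{t,x}\in\mathbb{R}^{d\times d}$, $\Phi_{t,u}\in\mathbb{R}^{p\times d}$, $\Phi_{t,w}\in\mathbb{R}^{q\times d}$ are given matrices, and $\varphi_{t,u,w}$ is a given bilinear map $\mathbb{R}^p\times\mathbb{R}^q\to\mathbb{R}^d$, written $(v,w)\mapsto\varphi_{t,u,w}[v,w,\cdot]$ (in the application $\varphi_{t,u,w}=\nabla^2_{uw}\phi_t(x_t,u_t,0)$ for noisy dynamics $\phi_t$). The vectors $\psi_{t,1},\ldots,\psi_{t,q}\in\mathbb{R}^d$ are the columns of $\Phi_{t,w}^\top\in\mathbb{R}^{d\times q}$, and $\Psi_{t,i}\in\mathbb{R}^{d\times p}$ is the matrix with $\Psi_{t,i}v=\varphi_{t,u,w}[v,e_i,\cdot]$, $e_i$ the $i$-th canonical vector of $\mathbb{R}^q$. $h_{t,x}\in\mathbb{R}^d$, $g_{t,u}\in\mathbb{R}^p$, $H_{t,xx}$, $G_{t,uu}$ symmetric. *)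

theory Defs
  imports "HOL-Analysis.Analysis" "HOL-Probability.Probability"
begin

definition qform :: "real^'n \<Rightarrow> real^'n^'n \<Rightarrow> real^'n \<Rightarrow> real" where
  "qform a A y = a \<bullet> y + (1/2) * (y \<bullet> (A *v y))"

definition psd :: "real^'n^'n \<Rightarrow> bool" where
  "psd A \<longleftrightarrow> (\<forall>x. 0 \<le> x \<bullet> (A *v x))"

definition gauss_expect :: "(real^'q \<Rightarrow> real) \<Rightarrow> real" where
  "gauss_expect f =
     (\<integral>x. f x \<partial>(density lborel (\<lambda>x::real^'q. \<Prod>i\<in>UNIV. std_normal_density (x $ i))))"

definition Psi_mat :: "(real^'p \<Rightarrow> real^'q \<Rightarrow> real^'d) \<Rightarrow> 'q \<Rightarrow> real^'p^'d" where
  "Psi_mat phi i = matrix (\<lambda>v. phi v (axis i 1))"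

text \<open>psi_i : i-th column of Phi_w^T, i.e. i-th row of Phi_w (Phi_w is q x d).\<close>
definition psi_vec :: "real^'d^'q \<Rightarrow> 'q \<Rightarrow> real^'d" where
  "psi_vec Pw i = Pw $ i"

definition dyn :: "real^'d^'d \<Rightarrow> real^'d^'p \<Rightarrow> real^'d^'q \<Rightarrow> (real^'p \<Rightarrow> real^'q \<Rightarrow> real^'d)
    \<Rightarrow> real^'d \<Rightarrow> real^'p \<Rightarrow> real^'q \<Rightarrow> real^'d" where
  "dyn Px Pu Pw phi y v w = transpose Px *v y + transpose Pu *v v + transpose Pw *v w + phi v w"

definition bellman_obj :: "real \<Rightarrow> real^'p \<Rightarrow> real^'p^'p \<Rightarrow> real^'d^'d \<Rightarrow> real^'d^'p \<Rightarrow> real^'d^'q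
    \<Rightarrow> (real^'p \<Rightarrow> real^'q \<Rightarrow> real^'d) \<Rightarrow> (real^'d \<Rightarrow> real) \<Rightarrow> real^'d \<Rightarrow> real^'p \<Rightarrow> real" where
  "bellman_obj \<gamma> g G Px Pu Pw phi cnext y v =
     qform g G v + 1 / (2 * \<gamma>) * (norm v)\<^sup>2 + gauss_expect (\<lambda>w. cnext (dyn Px Pu Pw phi y v w))"

text \<open>ctg_aux ... tau n = c_{tau - n} (Bellman recursion, backwards from c_tau = q_{h_tau}).\<close>
primrec ctg_aux :: "real \<Rightarrow> (nat \<Rightarrow> real^'d) \<Rightarrow> (nat \<Rightarrow> real^'d^'d) \<Rightarrow> (nat \<Rightarrow> real^'p)
    \<Rightarrow> (nat \<Rightarrow> real^'p^'p) \<Rightarrow> (nat \<Rightarrow> real^'d^'d) \<Rightarrow> (nat \<Rightarrow> real^'d^'p) \<Rightarrow> (nat \<Rightarrow> real^'d^'q)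
    \<Rightarrow> (nat \<Rightarrow> real^'p \<Rightarrow> real^'q \<Rightarrow> real^'d) \<Rightarrow> nat \<Rightarrow> nat \<Rightarrow> real^'d \<Rightarrow> real" where
  "ctg_aux \<gamma> h H g G Px Pu Pw phi \<tau> 0 = qform (h \<tau>) (H \<tau>)"
| "ctg_aux \<gamma> h H g G Px Pu Pw phi \<tau> (Suc n) =
     (let t = \<tau> - Suc n in
       (\<lambda>y. qform (h t) (H t) y +
          (INF v. bellman_obj \<gamma> (g t) (G t) (Px t) (Pu t) (Pw t) (phi t)
                     (ctg_aux \<gamma> h H g G Px Pu Pw phi \<tau> n) y v)))"

definition cost_to_go where
  "cost_to_go \<gamma> h H g G Px Pu Pw phi \<tau> t = ctg_aux \<gamma> h H g G Px Pu Pw phi \<tau> (\<tau> - t)"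

definition W_xx :: "real^'d^'d \<Rightarrow> real^'d^'d \<Rightarrow> real^'d^'d \<Rightarrow> real^'d^'d" where
  "W_xx H Px C1 = H + Px ** C1 ** transpose Px"

definition W_ux :: "real^'d^'d \<Rightarrow> real^'d^'p \<Rightarrow> real^'d^'d \<Rightarrow> real^'d^'p" where
  "W_ux Px Pu C1 = Pu ** C1 ** transpose Px"

definition W_uu :: "real \<Rightarrow> real^'p^'p \<Rightarrow> real^'d^'p \<Rightarrow> (real^'p \<Rightarrow> real^'q \<Rightarrow> real^'d)
    \<Rightarrow> real^'d^'d \<Rightarrow> real^'p^'p" where
  "W_uu \<gamma> G Pu phi C1 = G + Pu ** C1 ** transpose Pu
     + (\<Sum>i\<in>UNIV. transpose (Psi_mat phi i) ** C1 ** Psi_mat phi i) + (1 / \<gamma>) *\<^sub>R mat 1"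

definition w_x :: "real^'d \<Rightarrow> real^'d^'d \<Rightarrow> real^'d \<Rightarrow> real^'d" where
  "w_x h Px c1 = h + Px *v c1"

definition w_u :: "real^'p \<Rightarrow> real^'d^'p \<Rightarrow> real^'d^'q \<Rightarrow> (real^'p \<Rightarrow> real^'q \<Rightarrow> real^'d)
    \<Rightarrow> real^'d^'d \<Rightarrow> real^'d \<Rightarrow> real^'p" where
  "w_u g Pu Pw phi C1 c1 = g + Pu *v c1
     + (\<Sum>i\<in>UNIV. transpose (Psi_mat phi i) *v (C1 *v psi_vec Pw i))"

text \<open>ric_aux ... tau n = (C_{tau-n,xx}, c_{tau-n,x}).\<close>
primrec ric_aux :: "real \<Rightarrow> (nat \<Rightarrow> real^'d) \<Rightarrow> (nat \<Rightarrow> real^'d^'d) \<Rightarrow> (nat \<Rightarrow> real^'p)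
    \<Rightarrow> (nat \<Rightarrow> real^'p^'p) \<Rightarrow> (nat \<Rightarrow> real^'d^'d) \<Rightarrow> (nat \<Rightarrow> real^'d^'p) \<Rightarrow> (nat \<Rightarrow> real^'d^'q)
    \<Rightarrow> (nat \<Rightarrow> real^'p \<Rightarrow> real^'q \<Rightarrow> real^'d) \<Rightarrow> nat \<Rightarrow> nat \<Rightarrow> (real^'d^'d) \<times> (real^'d)" where
  "ric_aux \<gamma> h H g G Px Pu Pw phi \<tau> 0 = (H \<tau>, h \<tau>)"
| "ric_aux \<gamma> h H g G Px Pu Pw phi \<tau> (Suc n) =
     (let t = \<tau> - Suc n;
          C1 = fst (ric_aux \<gamma> h H g G Px Pu Pw phi \<tau> n);
          c1 = snd (ric_aux \<gamma> h H g G Px Pu Pw phi \<tau> n);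
          Wux = W_ux (Px t) (Pu t) C1;
          Wuui = matrix_inv (W_uu \<gamma> (G t) (Pu t) (phi t) C1)
      in (W_xx (H t) (Px t) C1 - transpose Wux ** Wuui ** Wux,
          w_x (h t) (Px t) c1 - transpose Wux *v (Wuui *v w_u (g t) (Pu t) (Pw t) (phi t) C1 c1)))"

definition C_xx where "C_xx \<gamma> h H g G Px Pu Pw phi \<tau> t = fst (ric_aux \<gamma> h H g G Px Pu Pw phi \<tau> (\<tau> - t))"
definition c_x where "c_x \<gamma> h H g G Px Pu Pw phi \<tau> t = snd (ric_aux \<gamma> h H g G Px Pu Pw phi \<tau> (\<tau> - t))"

definition K_gain where
  "K_gain \<gamma> h H g G Px Pu Pw phi \<tau> t =
     (let C1 = C_xx \<gamma> h H g G Px Pu Pw phi \<tau> (Suc t) in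
      - (matrix_inv (W_uu \<gamma> (G t) (Pu t) (phi t) C1) ** W_ux (Px t) (Pu t) C1))"

definition k_gain where
  "k_gain \<gamma> h H g G Px Pu Pw phi \<tau> t =
     (let C1 = C_xx \<gamma> h H g G Px Pu Pw phi \<tau> (Suc t); c1 = c_x \<gamma> h H g G Px Pu Pw phi \<tau> (Suc t) in
      - (matrix_inv (W_uu \<gamma> (G t) (Pu t) (phi t) C1) *v w_u (g t) (Pu t) (Pw t) (phi t) C1 c1))"

end

(*
  Backward induction along the Riccati recursion. If c_{t+1} = qform c C + const with C symmetric
  psd, then, the dynamics being affine in the noise w (phi is bilinear), the expectation in the
  Bellman objective only sees the first two moments of w ~ N(0, I): the objective is the quadratic
  (1/2) v' W_uu v + v' (W_ux y + w_u) in the control plus terms in y alone, the second moments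
  contributing the Psi-terms of W_uu and w_u. As W_uu >= I / gamma is positive definite, completing
  the square gives the unique minimiser v = - W_uu^-1 (W_ux y + w_u), and the minimum is quadratic
  in y with the Schur complement C_t = W_xx - W_ux' W_uu^-1 W_ux as matrix; C_t is psd since its
  quadratic form is a partial minimum of the psd joint form in (y, v).
*)
theory Submission
  imports Defs
begin

abbreviation std_normal_vec :: "(real^'q::finite) measure" where
  "std_normal_vec \<equiv> density lborel (\<lambda>x. \<Prod>i\<in>UNIV. std_normal_density (x $ i))"

lemma Basis_vec_range: "(Basis :: (real^'q) set) = range (\<lambda>j. axis j 1)"
  by (auto simp: Basis_vec_def)

lemma sum_Basis_vec_nth:
  fixes f :: "real^'q \<Rightarrow> real"
  shows "(\<Sum>b\<in>Basis. f b *\<^sub>R b) $ i = f (axis i 1)"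
proof -
  have "(\<Sum>b\<in>Basis. f b *\<^sub>R b) $ i = (\<Sum>j\<in>UNIV. f (axis j 1) * axis j 1 $ i)"
    unfolding sum_component Basis_vec_range
    by (subst sum.reindex) (auto simp: inj_on_def axis_eq_axis)
  also have "\<dots> = f (axis i 1)"
    by (simp add: axis_def if_distrib cong: if_cong)
  finally show ?thesis .
qed

text \<open>Via \<open>lborel_eq\<close>, Lebesgue measure on \<open>real^'q\<close> is the image of the product of copies
  of Lebesgue measure indexed by \<open>Basis\<close>, so this is Fubini.\<close>
lemma lborel_vec_integral_prod:
  fixes F :: "'q::finite \<Rightarrow> real \<Rightarrow> real"
  assumes int: "\<And>i. integrable lborel (F i)"
  shows "integrable lborel (\<lambda>x::real^'q. \<Prod>i\<in>UNIV. F i (x $ i))"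
    and "(\<integral>x. (\<Prod>i\<in>UNIV. F i (x $ i)) \<partial>lborel) = (\<Prod>i\<in>UNIV. integral\<^sup>L lborel (F i))"
proof -
  let ?ax = "\<lambda>j::'q. axis j (1::real)"
  let ?P = "\<Pi>\<^sub>M b\<in>(Basis::(real^'q) set). lborel"
  have inj: "inj ?ax" by (auto simp: inj_on_def axis_eq_axis)
  define G where "G b = F (inv ?ax b)" for b
  have [measurable]: "F i \<in> borel_measurable lborel" for i using int by auto
  have [measurable]: "G b \<in> borel_measurable lborel" for b unfolding G_def by simp
  interpret product_sigma_finite "\<lambda>_::real^'q. lborel"
    by (simp add: product_sigma_finite_def lborel.sigma_finite_measure_axioms)
  have intG: "integrable lborel (G b)" for b unfolding G_def by (rule int)
  have eq: "(\<Prod>i\<in>UNIV. F i ((\<Sum>b\<in>Basis. f b *\<^sub>R b) $ i)) = (\<Prod>b\<in>Basis. G b (f b))"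
    for f :: "real^'q \<Rightarrow> real"
    unfolding sum_Basis_vec_nth unfolding Basis_vec_range G_def
    by (subst prod.reindex[OF inj]) (simp add: inv_f_f[OF inj])
  have eqI: "(\<Prod>i\<in>UNIV. integral\<^sup>L lborel (F i)) = (\<Prod>b\<in>Basis. integral\<^sup>L lborel (G b))"
    unfolding Basis_vec_range G_def by (subst prod.reindex[OF inj]) (simp add: inv_f_f[OF inj])
  have sum_meas[measurable]: "(\<lambda>f. \<Sum>b\<in>Basis. f b *\<^sub>R b) \<in> measurable ?P (borel :: (real^'q) measure)"
    by measurable
  have "integrable ?P (\<lambda>f. \<Prod>b\<in>Basis. G b (f b))"
    by (rule product_integrable_prod) (auto intro: intG)
  then show "integrable lborel (\<lambda>x::real^'q. \<Prod>i\<in>UNIV. F i (x $ i))"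
    by (subst lborel_eq, subst integrable_distr_eq[OF sum_meas]) (simp_all only: eq, measurable)
  have "integral\<^sup>L ?P (\<lambda>f. \<Prod>b\<in>Basis. G b (f b)) = (\<Prod>b\<in>Basis. integral\<^sup>L lborel (G b))"
    by (rule product_integral_prod) (auto intro: intG)
  then show "(\<integral>x. (\<Prod>i\<in>UNIV. F i (x $ i)) \<partial>lborel) = (\<Prod>i\<in>UNIV. integral\<^sup>L lborel (F i))"
    by (subst lborel_eq, subst integral_distr[OF sum_meas]) (simp_all only: eq eqI, measurable)
qed

lemma std_normal_vec_monomial:
  fixes k :: "'q::finite \<Rightarrow> nat"
  shows "integrable std_normal_vec (\<lambda>x::real^'q. \<Prod>i\<in>UNIV. (x $ i) ^ k i)"
    and "(\<integral>x. (\<Prod>i\<in>UNIV. (x $ i) ^ k i) \<partial>std_normal_vec)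
           = (\<Prod>i\<in>UNIV. \<integral>t. std_normal_density t * t ^ k i \<partial>lborel)"
proof -
  have nonneg: "0 \<le> (\<Prod>i\<in>UNIV. std_normal_density ((x::real^'q) $ i))" for x
    by (simp add: prod_nonneg normal_density_nonneg)
  have eq: "(\<Prod>i\<in>UNIV. std_normal_density (x $ i)) * (\<Prod>i\<in>UNIV. (x $ i) ^ k i)
      = (\<Prod>i\<in>UNIV. std_normal_density (x $ i) * (x $ i) ^ k i)" for x :: "real^'q"
    by (simp add: prod.distrib)
  note moments = lborel_vec_integral_prod[of "\<lambda>i t. std_normal_density t * t ^ k i",
      OF integrable_std_normal_moment]
  show "integrable std_normal_vec (\<lambda>x::real^'q. \<Prod>i\<in>UNIV. (x $ i) ^ k i)"
    using moments(1) by (simp add: integrable_density nonneg eq)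
  show "(\<integral>x. (\<Prod>i\<in>UNIV. (x $ i) ^ k i) \<partial>std_normal_vec)
           = (\<Prod>i\<in>UNIV. \<integral>t. std_normal_density t * t ^ k i \<partial>lborel)"
    using moments(2) by (simp add: integral_density nonneg eq)
qed

lemma std_normal_vec_prod_power:
  fixes A :: "'q::finite set"
  shows "integrable std_normal_vec (\<lambda>x::real^'q. \<Prod>l\<in>A. (x $ l) ^ n)"
    and "(\<integral>x. (\<Prod>l\<in>A. (x $ l) ^ n) \<partial>std_normal_vec)
           = (\<integral>t. std_normal_density t * t ^ n \<partial>lborel) ^ card A"
proof -
  let ?k = "\<lambda>l. if l \<in> A then n else 0"
  have monomial: "(\<Prod>l\<in>UNIV. (x $ l) ^ ?k l) = (\<Prod>l\<in>A. (x $ l) ^ n)" for x :: "real^'q"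
    by (simp add: if_distrib[of "power _"] prod.If_cases)
  have moment: "(\<Prod>l\<in>UNIV. \<integral>t. std_normal_density t * t ^ ?k l \<partial>lborel)
      = (\<integral>t. std_normal_density t * t ^ n \<partial>lborel) ^ card A"
    using integral_std_normal_moment_even[of 0]
    by (simp add: if_distrib[of "\<lambda>k. \<integral>t. std_normal_density t * t ^ k \<partial>lborel"] prod.If_cases)
  show "integrable std_normal_vec (\<lambda>x::real^'q. \<Prod>l\<in>A. (x $ l) ^ n)"
    using std_normal_vec_monomial(1)[of ?k] by (simp only: monomial)
  show "(\<integral>x. (\<Prod>l\<in>A. (x $ l) ^ n) \<partial>std_normal_vec)
           = (\<integral>t. std_normal_density t * t ^ n \<partial>lborel) ^ card A"
    using std_normal_vec_monomial(2)[of ?k] by (simp only: monomial moment)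
qed

lemma std_normal_vec_moments:
  fixes i j :: "'q::finite"
  shows "measure (std_normal_vec :: (real^'q) measure) UNIV = 1"
    and "integrable std_normal_vec (\<lambda>x::real^'q. c :: real)"
    and "integrable std_normal_vec (\<lambda>x::real^'q. x $ i)"
    and "(\<integral>x. x $ i \<partial>(std_normal_vec :: (real^'q) measure)) = 0"
    and "integrable std_normal_vec (\<lambda>x::real^'q. x $ i * x $ j)"
    and "(\<integral>x. x $ i * x $ j \<partial>(std_normal_vec :: (real^'q) measure)) = (if i = j then 1 else 0)"
proof -
  note empty = std_normal_vec_prod_power[where A="{}" and 'q='q and n=0]
  note single = std_normal_vec_prod_power[where A="{i}" and 'q='q]
  note pair = std_normal_vec_prod_power[where A="{i, j}" and 'q='q and n=1]
  have m1: "(\<integral>t. std_normal_density t * t ^ 1 \<partial>lborel) = 0"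
    using integral_std_normal_moment_odd[of 0] by simp
  have m2: "(\<integral>t. std_normal_density t * t ^ 2 \<partial>lborel) = 1"
    using integral_std_normal_moment_even[of 1] by simp
  show "measure (std_normal_vec :: (real^'q) measure) UNIV = 1"
    using empty(2) by simp
  show "integrable std_normal_vec (\<lambda>x::real^'q. c :: real)"
    using integrable_mult_right[OF empty(1), of c] by simp
  show "integrable std_normal_vec (\<lambda>x::real^'q. x $ i)"
    "(\<integral>x. x $ i \<partial>(std_normal_vec :: (real^'q) measure)) = 0"
    using single[of 1] m1 by simp_all
  show "integrable std_normal_vec (\<lambda>x::real^'q. x $ i * x $ j)"
    "(\<integral>x. x $ i * x $ j \<partial>(std_normal_vec :: (real^'q) measure)) = (if i = j then 1 else 0)"
    using single[of 2] pair m1 m2 by (cases "i = j"; simp add: power2_eq_square)+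
qed

lemma gauss_expect_quadratic:
  fixes b :: "'q::finite \<Rightarrow> real" and M :: "'q \<Rightarrow> 'q \<Rightarrow> real"
  shows "gauss_expect (\<lambda>w::real^'q. a + (\<Sum>i\<in>UNIV. b i * w $ i)
           + (\<Sum>i\<in>UNIV. \<Sum>j\<in>UNIV. M i j * (w $ i * w $ j)))
       = a + (\<Sum>i\<in>UNIV. M i i)"
  unfolding gauss_expect_def
  by (simp add: std_normal_vec_moments integrable_sum integral_sum integral_add if_distrib
      cong: if_cong)

declare transpose_matrix_vector [simp del]

lemma inner_transpose_matrix_vector: "(x::real^'n) \<bullet> (transpose A *v y) = (A *v x) \<bullet> y"
  by (metis dot_lmul_matrix inner_commute transpose_matrix_vector)

lemma inner_matrix_vector: "(x::real^'n) \<bullet> (A *v y) = (transpose A *v x) \<bullet> y"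
  using inner_transpose_matrix_vector[of x "transpose A" y] by simp

lemma inner_symmetric_matrix_commute:
  assumes "transpose C = C"
  shows "(x::real^'n) \<bullet> (C *v z) = z \<bullet> (C *v x)"
  using inner_transpose_matrix_vector[of x C z] assms by (simp add: inner_commute)

lemma inner_symmetric_matrix_add:
  assumes "transpose C = C"
  shows "(x + z) \<bullet> (C *v (x + z)) = x \<bullet> (C *v x) + 2 * (z \<bullet> (C *v x)) + z \<bullet> (C *v (z::real^'n))"
  by (simp add: inner_add_left inner_add_right matrix_vector_right_distrib
      inner_symmetric_matrix_commute[OF assms, of x z])

lemma matrix_vector_mult_sum_left:
  "finite S \<Longrightarrow> (\<Sum>i\<in>S. M i) *v (v::real^'n) = (\<Sum>i\<in>S. M i *v v)"
  by (induction S rule: finite_induct) (simp_all add: matrix_vector_mult_add_rdistrib)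

lemma matrix_vector_mult_uminus_left: "(- A) *v (x::real^'n) = - (A *v x)"
  by (simp add: vec_eq_iff matrix_vector_mult_def sum_negf)

lemma transpose_add: "transpose (A + B) = transpose A + (transpose B :: real^'n^'m)"
  by (simp add: transpose_def vec_eq_iff)

lemma transpose_diff: "transpose (A - B) = transpose A - (transpose B :: real^'n^'m)"
  by (simp add: transpose_def vec_eq_iff)

lemma transpose_sum: "finite S \<Longrightarrow> transpose (\<Sum>i\<in>S. M i) = (\<Sum>i\<in>S. transpose (M i) :: real^'n^'m)"
  by (induction S rule: finite_induct) (simp_all add: transpose_add, simp add: transpose_def vec_eq_iff)

definition pd :: "real^'n^'n \<Rightarrow> bool" where
  "pd A \<longleftrightarrow> (\<forall>x. x \<noteq> 0 \<longrightarrow> 0 < x \<bullet> (A *v x))"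

lemma pd_imp_psd: "pd A \<Longrightarrow> psd A"
  unfolding pd_def psd_def by (metis inner_zero_left order_le_less)

lemma pd_invertible:
  assumes "pd W"
  shows "invertible W"
proof -
  have "inj ((*v) W)"
    unfolding vec.inj_iff_eq_0
  proof (intro allI impI)
    fix x assume "W *v x = 0"
    then show "x = 0" using assms by (auto simp: pd_def)
  qed
  then show ?thesis using invertible_left_inverse matrix_left_invertible_injective by blast
qed

lemma matrix_inv_inverse:
  assumes "invertible (W::real^'n^'n)"
  shows "W ** matrix_inv W = mat 1" and "matrix_inv W ** W = mat 1"
proof -
  have "\<exists>A'. W ** A' = mat 1 \<and> A' ** W = mat 1" using assms by (simp add: invertible_def)
  then have "W ** matrix_inv W = mat 1 \<and> matrix_inv W ** W = mat 1"
    unfolding matrix_inv_def by (rule someI_ex)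
  then show "W ** matrix_inv W = mat 1" "matrix_inv W ** W = mat 1" by auto
qed

lemma transpose_matrix_inv_symmetric:
  assumes "invertible (W::real^'n^'n)" and "transpose W = W"
  shows "transpose (matrix_inv W) = matrix_inv W"
proof -
  have "transpose (matrix_inv W) ** W = mat 1"
    using arg_cong[OF matrix_inv_inverse(1)[OF assms(1)], of transpose]
    by (simp add: matrix_transpose_mul assms(2))
  then have "transpose (matrix_inv W) ** (W ** matrix_inv W) = matrix_inv W"
    by (metis matrix_mul_assoc matrix_mul_lid)
  then show ?thesis
    by (simp add: matrix_inv_inverse(1)[OF assms(1)] matrix_mul_rid)
qed

lemma qform_complete_square:
  fixes W :: "real^'n^'n" and b :: "real^'n"
  assumes "invertible W" and "transpose W = W"
  defines "v\<^sub>0 \<equiv> - (matrix_inv W *v b)"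
  shows "qform b W v = - (1/2) * (b \<bullet> (matrix_inv W *v b)) + (1/2) * ((v - v\<^sub>0) \<bullet> (W *v (v - v\<^sub>0)))"
proof -
  have "W *v (matrix_inv W *v b) = b"
    by (simp add: matrix_vector_mul_assoc matrix_inv_inverse(1)[OF assms(1)])
  then show ?thesis
    unfolding qform_def v\<^sub>0_def
    by (simp add: inner_symmetric_matrix_add[OF assms(2)] inner_commute[of b] algebra_simps
        inner_symmetric_matrix_commute[OF assms(2), of "matrix_inv W *v b" v])
qed

lemma pd_qform_unique_argmin:
  fixes W :: "real^'n^'n" and b :: "real^'n"
  assumes "pd W" and "transpose W = W"
  defines "v\<^sub>0 \<equiv> - (matrix_inv W *v b)"
  shows "qform b W v\<^sub>0 \<le> qform b W v" and "qform b W v = qform b W v\<^sub>0 \<Longrightarrow> v = v\<^sub>0"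
proof -
  have square: "qform b W u = - (1/2) * (b \<bullet> (matrix_inv W *v b)) + (1/2) * ((u - v\<^sub>0) \<bullet> (W *v (u - v\<^sub>0)))"
    for u unfolding v\<^sub>0_def by (rule qform_complete_square[OF pd_invertible[OF assms(1)] assms(2)])
  show "qform b W v\<^sub>0 \<le> qform b W v"
    using pd_imp_psd[OF assms(1)] unfolding square psd_def by simp
  show "qform b W v = qform b W v\<^sub>0 \<Longrightarrow> v = v\<^sub>0"
    using assms(1) unfolding square by (auto simp: pd_def dest: spec[of _ "v - v\<^sub>0"])
qed

text \<open>The block matrix \<open>(A, B\<^sup>T; B, D)\<close> is given through its quadratic form.\<close>
lemma psd_schur_complement:
  fixes A :: "real^'n^'n" and B :: "real^'n^'m" and D :: "real^'m^'m"
  assumes "pd D" and "transpose D = D"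
    and block_psd: "\<And>y v. 0 \<le> y \<bullet> (A *v y) + 2 * (v \<bullet> (B *v y)) + v \<bullet> (D *v v)"
  shows "psd (A - transpose B ** matrix_inv D ** B)"
  unfolding psd_def
proof
  fix y :: "real^'n"
  let ?b = "B *v y"
  let ?v = "- (matrix_inv D *v ?b)"
  have "D *v (matrix_inv D *v x) = x" for x
    by (simp add: matrix_vector_mul_assoc matrix_inv_inverse(1)[OF pd_invertible[OF assms(1)]])
  then have "D *v ?v = - ?b"
    by (simp only: vec.neg)
  then have "y \<bullet> ((A - transpose B ** matrix_inv D ** B) *v y)
      = y \<bullet> (A *v y) + 2 * (?v \<bullet> ?b) + ?v \<bullet> (D *v ?v)"
    by (simp add: matrix_vector_mult_diff_rdistrib inner_diff_right inner_commute[of ?b]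
        matrix_vector_mul_assoc[symmetric] inner_transpose_matrix_vector)
  then show "0 \<le> y \<bullet> ((A - transpose B ** matrix_inv D ** B) *v y)"
    using block_psd[of y ?v] by simp
qed

lemma linear_vec_expansion:
  fixes f :: "real^'q \<Rightarrow> real^'d"
  assumes "linear f"
  shows "f w = (\<Sum>i\<in>UNIV. w $ i *\<^sub>R f (axis i 1))"
proof -
  have "f w = f (\<Sum>i\<in>UNIV. w $ i *\<^sub>R axis i 1)"
    using basis_expansion[of w] by (simp add: scalar_mult_eq_scaleR)
  also have "\<dots> = (\<Sum>i\<in>UNIV. w $ i *\<^sub>R f (axis i 1))"
    by (simp add: linear_sum[OF assms] linear_cmul[OF assms])
  finally show ?thesis .
qed

lemma Psi_mat_matrix_vector:
  assumes "bilinear phi"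
  shows "Psi_mat phi i *v v = phi v (axis i 1)"
proof -
  have "linear (\<lambda>v. phi v (axis i 1))" using assms by (simp add: bilinear_def)
  then show ?thesis unfolding Psi_mat_def by (simp add: matrix_vector_mul(2))
qed

lemma transpose_matrix_vector_psi_vec:
  "transpose Pw *v (w::real^'q) = (\<Sum>i\<in>UNIV. w $ i *\<^sub>R psi_vec (Pw::real^'d^'q) i)"
  by (simp add: vec_eq_iff transpose_matrix_vector vector_matrix_mult_def sum_component psi_vec_def
      mult.commute)

lemma dyn_affine_in_noise:
  assumes "bilinear phi"
  shows "dyn Px Pu Pw phi y v w = (transpose Px *v y + transpose Pu *v v)
     + (\<Sum>i\<in>UNIV. w $ i *\<^sub>R (psi_vec Pw i + Psi_mat phi i *v v))"
proof -
  have "linear (phi v)" using assms by (simp add: bilinear_def)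
  then have "phi v w = (\<Sum>i\<in>UNIV. w $ i *\<^sub>R phi v (axis i 1))" by (rule linear_vec_expansion)
  then show ?thesis
    unfolding dyn_def transpose_matrix_vector_psi_vec Psi_mat_matrix_vector[OF assms]
    by (simp add: scaleR_add_right sum.distrib add.assoc)
qed

lemma qform_affine_expansion:
  fixes C :: "real^'d^'d" and a :: "'q::finite \<Rightarrow> real^'d" and w :: "real^'q"
  assumes "transpose C = C"
  shows "qform c C (m + (\<Sum>i\<in>UNIV. w $ i *\<^sub>R a i))
    = qform c C m + (\<Sum>i\<in>UNIV. (a i \<bullet> (C *v m) + c \<bullet> a i) * w $ i)
      + (\<Sum>i\<in>UNIV. \<Sum>j\<in>UNIV. ((1/2) * (a j \<bullet> (C *v a i))) * (w $ i * w $ j))"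
proof -
  let ?u = "\<Sum>i\<in>UNIV. w $ i *\<^sub>R a i"
  have "?u \<bullet> (C *v ?u) = (\<Sum>i\<in>UNIV. \<Sum>j\<in>UNIV. (a j \<bullet> (C *v a i)) * (w $ i * w $ j))"
    by (simp add: inner_sum_left inner_sum_right vec.sum matrix_scaleR_vector_ac sum_distrib_left
        mult_ac scaleR_matrix_vector_assoc[symmetric])
  then show ?thesis
    unfolding qform_def inner_symmetric_matrix_add[OF assms]
    by (simp add: inner_add_right inner_sum_left inner_sum_right algebra_simps sum.distrib
        sum_distrib_left)
qed

lemma gauss_expect_qform_affine:
  fixes C :: "real^'d^'d" and a :: "'q::finite \<Rightarrow> real^'d"
  assumes "transpose C = C"
  shows "gauss_expect (\<lambda>w::real^'q. qform c C (m + (\<Sum>i\<in>UNIV. w $ i *\<^sub>R a i)) + k)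
    = qform c C m + k + (1/2) * (\<Sum>i\<in>UNIV. a i \<bullet> (C *v a i))"
proof -
  have "(\<lambda>w::real^'q. qform c C (m + (\<Sum>i\<in>UNIV. w $ i *\<^sub>R a i)) + k)
    = (\<lambda>w. (qform c C m + k) + (\<Sum>i\<in>UNIV. (a i \<bullet> (C *v m) + c \<bullet> a i) * w $ i)
        + (\<Sum>i\<in>UNIV. \<Sum>j\<in>UNIV. ((1/2) * (a j \<bullet> (C *v a i))) * (w $ i * w $ j)))"
    by (simp add: qform_affine_expansion[OF assms] fun_eq_iff)
  then show ?thesis
    by (simp only: gauss_expect_quadratic) (simp add: sum_distrib_left)
qed

lemma inner_W_uu:
  "v \<bullet> (W_uu \<gamma> G Pu phi C *v v) = v \<bullet> (G *v v) + (transpose Pu *v v) \<bullet> (C *v (transpose Pu *v v))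
     + (\<Sum>i\<in>UNIV. (Psi_mat phi i *v v) \<bullet> (C *v (Psi_mat phi i *v v))) + (1/\<gamma>) * (v \<bullet> v)"
  unfolding W_uu_def
  by (simp add: matrix_vector_mult_add_rdistrib matrix_vector_mult_sum_left inner_add_right
      inner_sum_right matrix_vector_mul_assoc[symmetric] inner_matrix_vector[of v Pu]
      inner_matrix_vector[of v "transpose _"] scaleR_matrix_vector_assoc[symmetric])

lemma inner_W_ux: "v \<bullet> (W_ux Px Pu C *v y) = (transpose Pu *v v) \<bullet> (C *v (transpose Px *v y))"
  unfolding W_ux_def by (simp add: matrix_vector_mul_assoc[symmetric] inner_matrix_vector[of v Pu])

lemma inner_w_u:
  "v \<bullet> w_u g Pu Pw phi C c
     = g \<bullet> v + (transpose Pu *v v) \<bullet> c + (\<Sum>i\<in>UNIV. (Psi_mat phi i *v v) \<bullet> (C *v psi_vec Pw i))"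
  unfolding w_u_def
  by (simp add: inner_add_right inner_sum_right inner_matrix_vector[of v Pu]
      inner_matrix_vector[of v "transpose _"] inner_commute)

lemma bellman_obj_qform:
  fixes C :: "real^'d^'d" and phi :: "real^'p \<Rightarrow> real^'q::finite \<Rightarrow> real^'d"
  assumes "transpose C = C" and "bilinear phi"
  shows "bellman_obj \<gamma> g G Px Pu Pw phi (\<lambda>x. qform c C x + \<kappa>) y v
    = qform (W_ux Px Pu C *v y + w_u g Pu Pw phi C c) (W_uu \<gamma> G Pu phi C) v
      + (qform c C (transpose Px *v y) + (1/2) * (\<Sum>i\<in>UNIV. psi_vec Pw i \<bullet> (C *v psi_vec Pw i)) + \<kappa>)"
proof -
  let ?p = "transpose Px *v y" and ?q = "transpose Pu *v v"
  let ?s = "\<lambda>i. psi_vec Pw i" and ?S = "\<lambda>i. Psi_mat phi i *v v"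
  have "bellman_obj \<gamma> g G Px Pu Pw phi (\<lambda>x. qform c C x + \<kappa>) y v
    = qform g G v + 1 / (2 * \<gamma>) * (v \<bullet> v) + qform c C (?p + ?q) + \<kappa>
      + (1/2) * (\<Sum>i\<in>UNIV. (?s i + ?S i) \<bullet> (C *v (?s i + ?S i)))"
    unfolding bellman_obj_def dyn_affine_in_noise[OF assms(2)] gauss_expect_qform_affine[OF assms(1)]
    by (simp add: power2_norm_eq_inner)
  also have "\<dots> = qform (W_ux Px Pu C *v y + w_u g Pu Pw phi C c) (W_uu \<gamma> G Pu phi C) v
      + (qform c C ?p + (1/2) * (\<Sum>i\<in>UNIV. ?s i \<bullet> (C *v ?s i)) + \<kappa>)"
    unfolding qform_def inner_commute[of "W_ux Px Pu C *v y + w_u g Pu Pw phi C c" v]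
      inner_symmetric_matrix_add[OF assms(1)] inner_add_right inner_W_uu inner_W_ux inner_w_u
    by (simp add: inner_add_left sum.distrib sum_distrib_left algebra_simps inner_commute)
  finally show ?thesis .
qed

lemma W_uu_symmetric:
  assumes "transpose G = G" and "transpose C = C"
  shows "transpose (W_uu \<gamma> G Pu phi C) = W_uu \<gamma> G Pu phi C"
  unfolding W_uu_def
  by (simp add: transpose_add transpose_sum transpose_scalar matrix_transpose_mul assms matrix_mul_assoc)

lemma W_uu_pd:
  fixes C :: "real^'d^'d" and G :: "real^'p^'p" and Pu :: "real^'d^'p"
    and phi :: "real^'p \<Rightarrow> real^'q::finite \<Rightarrow> real^'d"
  assumes "\<gamma> > 0" and "psd G" and "psd C"
  shows "pd (W_uu \<gamma> G Pu phi C)"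
  unfolding pd_def
proof (intro allI impI)
  fix v :: "real^'p"
  assume "v \<noteq> 0"
  then have "0 < (1/\<gamma>) * (v \<bullet> v)" using assms(1) by simp
  moreover have "0 \<le> v \<bullet> (G *v v) + (transpose Pu *v v) \<bullet> (C *v (transpose Pu *v v))
      + (\<Sum>i\<in>UNIV. (Psi_mat phi i *v v) \<bullet> (C *v (Psi_mat phi i *v v)))"
    using assms(2,3) unfolding psd_def by (intro add_nonneg_nonneg sum_nonneg) auto
  ultimately show "0 < v \<bullet> (W_uu \<gamma> G Pu phi C *v v)"
    unfolding inner_W_uu by linarith
qed

lemma W_xx_symmetric:
  assumes "transpose H = H" and "transpose C = C"
  shows "transpose (W_xx H Px C) = W_xx H Px C"
  unfolding W_xx_def by (simp add: transpose_add matrix_transpose_mul assms matrix_mul_assoc)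

lemma inner_W_xx: "y \<bullet> (W_xx H Px C *v y) = y \<bullet> (H *v y) + (transpose Px *v y) \<bullet> (C *v (transpose Px *v y))"
  unfolding W_xx_def
  by (simp add: matrix_vector_mult_add_rdistrib inner_add_right matrix_vector_mul_assoc[symmetric]
      inner_matrix_vector[of y Px])

lemma riccati_update_symmetric:
  fixes H C :: "real^'d^'d" and G :: "real^'p^'p" and Px :: "real^'d^'d" and Pu :: "real^'d^'p"
    and phi :: "real^'p \<Rightarrow> real^'q::finite \<Rightarrow> real^'d"
  assumes "\<gamma> > 0" and "transpose H = H" and "transpose G = G" and "psd G"
    and "transpose C = C" and "psd C"
  shows "transpose (W_xx H Px C - transpose (W_ux Px Pu C) ** matrix_inv (W_uu \<gamma> G Pu phi C) ** W_ux Px Pu C)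
       = W_xx H Px C - transpose (W_ux Px Pu C) ** matrix_inv (W_uu \<gamma> G Pu phi C) ** W_ux Px Pu C"
proof -
  have "transpose (matrix_inv (W_uu \<gamma> G Pu phi C)) = matrix_inv (W_uu \<gamma> G Pu phi C)"
    by (rule transpose_matrix_inv_symmetric[OF pd_invertible[OF W_uu_pd[OF assms(1,4,6)]]
          W_uu_symmetric[OF assms(3,5)]])
  then show ?thesis
    using W_xx_symmetric[OF assms(2,5), of Px]
    by (simp add: transpose_diff matrix_transpose_mul matrix_mul_assoc)
qed

lemma riccati_update_psd:
  fixes H C :: "real^'d^'d" and G :: "real^'p^'p" and Px :: "real^'d^'d" and Pu :: "real^'d^'p"
    and phi :: "real^'p \<Rightarrow> real^'q::finite \<Rightarrow> real^'d"
  assumes "\<gamma> > 0" and "psd H" and "transpose G = G" and "psd G"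
    and "transpose C = C" and "psd C"
  shows "psd (W_xx H Px C - transpose (W_ux Px Pu C) ** matrix_inv (W_uu \<gamma> G Pu phi C) ** W_ux Px Pu C)"
proof (rule psd_schur_complement[OF W_uu_pd[OF assms(1,4,6)] W_uu_symmetric[OF assms(3,5)]])
  fix y :: "real^'d" and v :: "real^'p"
  let ?p = "transpose Px *v y" and ?q = "transpose Pu *v v"
  have "y \<bullet> (W_xx H Px C *v y) + 2 * (v \<bullet> (W_ux Px Pu C *v y)) + v \<bullet> (W_uu \<gamma> G Pu phi C *v v)
    = y \<bullet> (H *v y) + (?p + ?q) \<bullet> (C *v (?p + ?q)) + v \<bullet> (G *v v)
      + (\<Sum>i\<in>UNIV. (Psi_mat phi i *v v) \<bullet> (C *v (Psi_mat phi i *v v))) + (1/\<gamma>) * (v \<bullet> v)"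
    unfolding inner_W_xx inner_W_ux inner_W_uu inner_symmetric_matrix_add[OF assms(5)] by simp
  moreover have "0 \<le> y \<bullet> (H *v y) + (?p + ?q) \<bullet> (C *v (?p + ?q)) + v \<bullet> (G *v v)
      + (\<Sum>i\<in>UNIV. (Psi_mat phi i *v v) \<bullet> (C *v (Psi_mat phi i *v v))) + (1/\<gamma>) * (v \<bullet> v)"
    using assms(1,2,4,6) unfolding psd_def by (intro add_nonneg_nonneg sum_nonneg) auto
  ultimately show "0 \<le> y \<bullet> (W_xx H Px C *v y) + 2 * (v \<bullet> (W_ux Px Pu C *v y))
      + v \<bullet> (W_uu \<gamma> G Pu phi C *v v)"
    by simp
qed

lemma bellman_obj_unique_argmin:
  fixes C Px :: "real^'d^'d" and G :: "real^'p^'p" and Pu :: "real^'d^'p" and Pw :: "real^'d^'q"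
    and y c :: "real^'d" and g :: "real^'p" and \<kappa> :: real
    and phi :: "real^'p \<Rightarrow> real^'q::finite \<Rightarrow> real^'d"
  assumes "\<gamma> > 0" and "transpose G = G" and "psd G" and "transpose C = C" and "psd C"
    and "bilinear phi"
  defines "Wi \<equiv> matrix_inv (W_uu \<gamma> G Pu phi C)"
  defines "v\<^sub>0 \<equiv> - (Wi ** W_ux Px Pu C) *v y + - (Wi *v w_u g Pu Pw phi C c)"
    and "obj \<equiv> bellman_obj \<gamma> g G Px Pu Pw phi (\<lambda>x. qform c C x + \<kappa>) y"
  shows "obj v\<^sub>0 \<le> obj v" and "obj v = obj v\<^sub>0 \<Longrightarrow> v = v\<^sub>0"
proof -
  let ?b = "W_ux Px Pu C *v y + w_u g Pu Pw phi C c"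
  have "v\<^sub>0 = - (Wi *v ?b)"
    unfolding v\<^sub>0_def
    by (simp add: matrix_vector_mult_uminus_left matrix_vector_right_distrib matrix_vector_mul_assoc)
  then show "obj v\<^sub>0 \<le> obj v" and "obj v = obj v\<^sub>0 \<Longrightarrow> v = v\<^sub>0"
    using pd_qform_unique_argmin[OF W_uu_pd[OF assms(1,3,5)] W_uu_symmetric[OF assms(2,4)], of ?b]
    unfolding obj_def bellman_obj_qform[OF assms(4,6)] Wi_def by simp_all
qed

lemma bellman_value_qform:
  fixes H C Px :: "real^'d^'d" and G :: "real^'p^'p" and Pu :: "real^'d^'p" and Pw :: "real^'d^'q"
    and c :: "real^'d" and g :: "real^'p"
    and phi :: "real^'p \<Rightarrow> real^'q::finite \<Rightarrow> real^'d"
  assumes "\<gamma> > 0" and "transpose G = G" and "psd G" and "transpose C = C" and "psd C"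
    and "bilinear phi"
  defines "Wux \<equiv> W_ux Px Pu C" and "Wi \<equiv> matrix_inv (W_uu \<gamma> G Pu phi C)"
    and "wu \<equiv> w_u g Pu Pw phi C c"
  shows "\<exists>\<kappa>'. \<forall>y. qform h H y + (INF v. bellman_obj \<gamma> g G Px Pu Pw phi (\<lambda>x. qform c C x + \<kappa>) y v)
    = qform (w_x h Px c - transpose Wux *v (Wi *v wu)) (W_xx H Px C - transpose Wux ** Wi ** Wux) y + \<kappa>'"
proof (intro exI allI)
  fix y :: "real^'d"
  let ?obj = "bellman_obj \<gamma> g G Px Pu Pw phi (\<lambda>x. qform c C x + \<kappa>) y"
  let ?b = "Wux *v y + wu"
  let ?R = "qform c C (transpose Px *v y) + (1/2) * (\<Sum>i\<in>UNIV. psi_vec Pw i \<bullet> (C *v psi_vec Pw i)) + \<kappa>"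
  note W_uu = pd_invertible[OF W_uu_pd[OF assms(1,3,5)]] W_uu_symmetric[OF assms(2,4)]
  have sym_Wi: "transpose Wi = Wi"
    unfolding Wi_def by (rule transpose_matrix_inv_symmetric[OF W_uu])
  have "(INF v. ?obj v) = ?obj (- (Wi *v ?b))"
  proof (rule cInf_eq_minimum)
    fix x assume "x \<in> range ?obj"
    then show "?obj (- (Wi *v ?b)) \<le> x"
      using bellman_obj_unique_argmin(1)[OF assms(1-6)]
      by (auto simp: Wux_def Wi_def wu_def matrix_vector_mult_uminus_left matrix_vector_right_distrib
          matrix_vector_mul_assoc)
  qed (rule rangeI)
  also have "\<dots> = - (1/2) * (?b \<bullet> (Wi *v ?b)) + ?R"
    unfolding bellman_obj_qform[OF assms(4,6)] qform_complete_square[OF W_uu]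
    by (simp add: Wux_def Wi_def wu_def)
  finally have min_value: "(INF v. ?obj v) = - (1/2) * (?b \<bullet> (Wi *v ?b)) + ?R" .
  show "qform h H y + (INF v. ?obj v)
    = qform (w_x h Px c - transpose Wux *v (Wi *v wu)) (W_xx H Px C - transpose Wux ** Wi ** Wux) y
      + (- (1/2) * (wu \<bullet> (Wi *v wu)) + (1/2) * (\<Sum>i\<in>UNIV. psi_vec Pw i \<bullet> (C *v psi_vec Pw i)) + \<kappa>)"
  proof -
    let ?p = "transpose Px *v y" and ?u = "Wux *v y"
    have quadratic: "y \<bullet> ((W_xx H Px C - transpose Wux ** Wi ** Wux) *v y)
        = y \<bullet> (H *v y) + ?p \<bullet> (C *v ?p) - ?u \<bullet> (Wi *v ?u)"
    proof -
      have "(W_xx H Px C - transpose Wux ** Wi ** Wux) *v y = W_xx H Px C *v y - transpose Wux *v (Wi *v ?u)"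
        by (simp add: matrix_vector_mult_diff_rdistrib matrix_vector_mul_assoc matrix_mul_assoc)
      then show ?thesis
        by (simp only: inner_diff_right inner_W_xx inner_transpose_matrix_vector)
    qed
    have linear: "(w_x h Px c - transpose Wux *v (Wi *v wu)) \<bullet> y = h \<bullet> y + c \<bullet> ?p - ?u \<bullet> (Wi *v wu)"
      unfolding w_x_def inner_commute[of _ y]
      by (simp add: inner_diff_right inner_add_right inner_matrix_vector[of y Px]
          inner_transpose_matrix_vector inner_commute[of h y] inner_commute[of c]
          inner_commute[of "Px *v c" y])
    have "?b \<bullet> (Wi *v ?b) = ?u \<bullet> (Wi *v ?u) + 2 * (?u \<bullet> (Wi *v wu)) + wu \<bullet> (Wi *v wu)"
      unfolding inner_symmetric_matrix_add[OF sym_Wi] inner_symmetric_matrix_commute[OF sym_Wi, of wu ?u] ..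
    then show ?thesis
      unfolding min_value unfolding qform_def quadratic linear by (simp add: field_simps)
  qed
qed

lemma ctg_aux_eq_qform_ric_aux:
  fixes \<gamma> :: real and \<tau> :: nat
    and h :: "nat \<Rightarrow> real^'d" and H :: "nat \<Rightarrow> real^'d^'d"
    and g :: "nat \<Rightarrow> real^'p" and G :: "nat \<Rightarrow> real^'p^'p"
    and Px :: "nat \<Rightarrow> real^'d^'d" and Pu :: "nat \<Rightarrow> real^'d^'p" and Pw :: "nat \<Rightarrow> real^'d^'q::finite"
    and phi :: "nat \<Rightarrow> real^'p \<Rightarrow> real^'q \<Rightarrow> real^'d"
  defines "R n \<equiv> ric_aux \<gamma> h H g G Px Pu Pw phi \<tau> n"
  assumes "\<gamma> > 0"
    and "\<forall>t\<le>\<tau>. transpose (H t) = H t \<and> psd (H t)"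
    and "\<forall>t<\<tau>. transpose (G t) = G t \<and> psd (G t)"
    and "\<forall>t<\<tau>. bilinear (phi t)"
    and "n \<le> \<tau>"
  shows "transpose (fst (R n)) = fst (R n) \<and> psd (fst (R n))
    \<and> (\<exists>\<kappa>. ctg_aux \<gamma> h H g G Px Pu Pw phi \<tau> n = (\<lambda>x. qform (snd (R n)) (fst (R n)) x + \<kappa>))"
  using \<open>n \<le> \<tau>\<close>
proof (induction n)
  case 0
  show ?case
    using assms(3) by (auto simp: R_def fun_eq_iff)
next
  case (Suc n)
  define t where "t = \<tau> - Suc n"
  have "t < \<tau>" using Suc.prems by (simp add: t_def)
  then have H: "transpose (H t) = H t" "psd (H t)" and G: "transpose (G t) = G t" "psd (G t)"
    and phi: "bilinear (phi t)"
    using assms(3-5) by auto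
  from Suc obtain \<kappa> where C: "transpose (fst (R n)) = fst (R n)" "psd (fst (R n))"
    and ctg: "ctg_aux \<gamma> h H g G Px Pu Pw phi \<tau> n = (\<lambda>x. qform (snd (R n)) (fst (R n)) x + \<kappa>)"
    by auto
  have R_Suc: "R (Suc n) =
    (W_xx (H t) (Px t) (fst (R n)) - transpose (W_ux (Px t) (Pu t) (fst (R n)))
        ** matrix_inv (W_uu \<gamma> (G t) (Pu t) (phi t) (fst (R n))) ** W_ux (Px t) (Pu t) (fst (R n)),
     w_x (h t) (Px t) (snd (R n)) - transpose (W_ux (Px t) (Pu t) (fst (R n)))
        *v (matrix_inv (W_uu \<gamma> (G t) (Pu t) (phi t) (fst (R n)))
            *v w_u (g t) (Pu t) (Pw t) (phi t) (fst (R n)) (snd (R n))))"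
    by (simp add: R_def t_def Let_def)
  have ctg_Suc: "ctg_aux \<gamma> h H g G Px Pu Pw phi \<tau> (Suc n) = (\<lambda>y. qform (h t) (H t) y
      + (INF v. bellman_obj \<gamma> (g t) (G t) (Px t) (Pu t) (Pw t) (phi t)
                  (\<lambda>x. qform (snd (R n)) (fst (R n)) x + \<kappa>) y v))"
    by (simp add: t_def ctg Let_def)
  obtain \<kappa>' where "\<forall>y. qform (h t) (H t) y
      + (INF v. bellman_obj \<gamma> (g t) (G t) (Px t) (Pu t) (Pw t) (phi t)
                  (\<lambda>x. qform (snd (R n)) (fst (R n)) x + \<kappa>) y v)
    = qform (snd (R (Suc n))) (fst (R (Suc n))) y + \<kappa>'"
    using bellman_value_qform[OF assms(2) G C phi, where h="h t" and H="H t" and g="g t"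
        and Px="Px t" and Pu="Pu t" and Pw="Pw t" and c="snd (R n)" and \<kappa>=\<kappa>]
    unfolding R_Suc by auto
  then show ?case
    unfolding ctg_Suc
    using riccati_update_symmetric[OF assms(2) H(1) G C] riccati_update_psd[OF assms(2) H(2) G C]
    unfolding R_Suc fst_conv snd_conv by auto
qed

lemma cost_to_go_eq_qform:
  fixes \<gamma> :: real and \<tau> t :: nat
    and h :: "nat \<Rightarrow> real^'d" and H :: "nat \<Rightarrow> real^'d^'d"
    and g :: "nat \<Rightarrow> real^'p" and G :: "nat \<Rightarrow> real^'p^'p"
    and Px :: "nat \<Rightarrow> real^'d^'d" and Pu :: "nat \<Rightarrow> real^'d^'p" and Pw :: "nat \<Rightarrow> real^'d^'q::finite"
    and phi :: "nat \<Rightarrow> real^'p \<Rightarrow> real^'q \<Rightarrow> real^'d"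
  defines "C \<equiv> C_xx \<gamma> h H g G Px Pu Pw phi \<tau> t" and "c \<equiv> c_x \<gamma> h H g G Px Pu Pw phi \<tau> t"
  assumes "\<gamma> > 0"
    and "\<forall>t\<le>\<tau>. transpose (H t) = H t \<and> psd (H t)"
    and "\<forall>t<\<tau>. transpose (G t) = G t \<and> psd (G t)"
    and "\<forall>t<\<tau>. bilinear (phi t)"
    and "t \<le> \<tau>"
  shows "transpose C = C \<and> psd C
    \<and> (\<exists>\<kappa>. cost_to_go \<gamma> h H g G Px Pu Pw phi \<tau> t = (\<lambda>x. qform c C x + \<kappa>))"
  using ctg_aux_eq_qform_ric_aux[OF assms(3-6), of "\<tau> - t"]
  unfolding C_def c_def C_xx_def c_x_def cost_to_go_def by simp

theorem proposition10:
  fixes \<gamma> :: real and \<tau> :: nat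
    and h :: "nat \<Rightarrow> real^'d" and H :: "nat \<Rightarrow> real^'d^'d"
    and g :: "nat \<Rightarrow> real^'p" and G :: "nat \<Rightarrow> real^'p^'p"
    and Px :: "nat \<Rightarrow> real^'d^'d" and Pu :: "nat \<Rightarrow> real^'d^'p" and Pw :: "nat \<Rightarrow> real^'d^'q"
    and phi :: "nat \<Rightarrow> real^'p \<Rightarrow> real^'q \<Rightarrow> real^'d"
  assumes "\<gamma> > 0"
    and "\<forall>t\<le>\<tau>. transpose (H t) = H t \<and> psd (H t)"
    and "\<forall>t<\<tau>. transpose (G t) = G t \<and> psd (G t)"
    and "\<forall>t<\<tau>. bilinear (phi t)"
    and "h 0 = 0" and "H 0 = 0"
  shows "(\<forall>t\<le>\<tau>.
            transpose (C_xx \<gamma> h H g G Px Pu Pw phi \<tau> t) = C_xx \<gamma> h H g G Px Pu Pw phi \<tau> t \<and>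
            psd (C_xx \<gamma> h H g G Px Pu Pw phi \<tau> t) \<and>
            (\<exists>\<kappa>. \<forall>x. cost_to_go \<gamma> h H g G Px Pu Pw phi \<tau> t x
                 = (1/2) * (x \<bullet> (C_xx \<gamma> h H g G Px Pu Pw phi \<tau> t *v x))
                   + c_x \<gamma> h H g G Px Pu Pw phi \<tau> t \<bullet> x + \<kappa>))
       \<and> (\<forall>t<\<tau>. \<forall>y.
            (let vs = K_gain \<gamma> h H g G Px Pu Pw phi \<tau> t *v y + k_gain \<gamma> h H g G Px Pu Pw phi \<tau> t;
                 obj = bellman_obj \<gamma> (g t) (G t) (Px t) (Pu t) (Pw t) (phi t)
                         (cost_to_go \<gamma> h H g G Px Pu Pw phi \<tau> (Suc t)) y
             in (\<forall>v. obj vs \<le> obj v) \<and> (\<forall>v. obj v = obj vs \<longrightarrow> v = vs)))"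
proof (intro conjI allI impI)
  let ?C = "C_xx \<gamma> h H g G Px Pu Pw phi \<tau>" and ?c = "c_x \<gamma> h H g G Px Pu Pw phi \<tau>"
    and ?V = "cost_to_go \<gamma> h H g G Px Pu Pw phi \<tau>"
  note quadratic = cost_to_go_eq_qform[where h=h and g=g and Px=Px and Pu=Pu and Pw=Pw, OF assms(1-4)]
  {
    fix t assume "t \<le> \<tau>"
    then obtain \<kappa> where "transpose (?C t) = ?C t" "psd (?C t)"
      and V: "?V t = (\<lambda>x. qform (?c t) (?C t) x + \<kappa>)"
      using quadratic by auto
    then show "transpose (?C t) = ?C t" "psd (?C t)"
      "\<exists>\<kappa>. \<forall>x. ?V t x = (1/2) * (x \<bullet> (?C t *v x)) + ?c t \<bullet> x + \<kappa>"
      by (auto simp: V qform_def algebra_simps)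
  next
    fix t y assume "t < \<tau>"
    then have G: "transpose (G t) = G t" "psd (G t)" and phi: "bilinear (phi t)"
      using assms(3,4) by auto
    obtain \<kappa> where C: "transpose (?C (Suc t)) = ?C (Suc t)" "psd (?C (Suc t))"
      and V: "?V (Suc t) = (\<lambda>x. qform (?c (Suc t)) (?C (Suc t)) x + \<kappa>)"
      using quadratic[of "Suc t"] \<open>t < \<tau>\<close> by auto
    show "let vs = K_gain \<gamma> h H g G Px Pu Pw phi \<tau> t *v y + k_gain \<gamma> h H g G Px Pu Pw phi \<tau> t;
        obj = bellman_obj \<gamma> (g t) (G t) (Px t) (Pu t) (Pw t) (phi t) (?V (Suc t)) y
      in (\<forall>v. obj vs \<le> obj v) \<and> (\<forall>v. obj v = obj vs \<longrightarrow> v = vs)"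
      unfolding Let_def K_gain_def k_gain_def V
      using bellman_obj_unique_argmin[OF assms(1) G C phi] by blast
  }
qed

end
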